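(* Let $(G_n)_{n\in\mathbb{N}}$ be an $\mathrm{FO}$-convergent sequence of finite graphs with modeling limit $L$, and let $\xi(x)$ be a formula in the language of graphs with one free variable such that $\xi(L)$ is finite and nonempty, $\xi(L)$ contains no nonempty proper subset of the form $\chi(L)$ for a formula $\chi(x)$ in the language of graphs, and $|\xi(G_n)|=|\xi(L)|$ for every $n$. Then for every formula $\phi$ with $p$ free variables ($p\ge 0$) in the language of rooted graphs there exist a sequence $(r_n)$ with $r_n\in\xi(G_n)$ and a vertex $r\in\xi(L)$ such that $\lim_{n\to\infty}\langle\phi,(G_n,r_n)\rangle=\langle\phi,(L,r)\rangle$.
   Context: Graphs are first-order structures in the language with one binary (edge) relation. For a formula $\phi$ with $p$ free variables and a structure $G$, $\phi(G)=\{\mathbf{v}\in V(G)^p : G\models\phi(\mathbf{v})\}$. The Stone pairing of $\phi$ ($p\ge1$) with a finite graph $G$ is $\langle\phi,G\rangle=|\phi(G)|/|V(G)|^p$; for sentences it is $1$ if $G\models\phi$ and $0$ otherwise. A sequence of finite graphs is $\mathrm{FO}$-convergent if $(\langle\phi,G_n\rangle)$ converges for every formula $\phi$. A modeling is a graph $L$ whose vertex set is a standard Borel space with a probability measure $\nu$ such that every first-order definable set $\phi(L)\subseteq V(L)^p$ is measurable; $\langle\phi,L\rangle=\nu^{\otimes p}(\phi(L))$ (and $1$/$0$ for sentences). $L$ is a modeling limit of $(G_n)$ if $\lim_n\langle\phi,G_n\rangle=\langle\phi,L\rangle$ for all $\phi$. The language of rooted graphs adds a constant symbol $\mathrm{Root}$;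 $(G,r)$ is $G$ with $\mathrm{Root}$ interpreted as $r$, and Stone pairings with rooted structures are defined in the same way. *)

theory Defs
  imports "HOL-Probability.Probability"
begin

datatype fterm = Var nat | Root

datatype fform =
    FEq fterm fterm
  | FAdj fterm fterm
  | FNeg fform
  | FConj fform fform
  | FEx nat fform

fun tfv :: "fterm \<Rightarrow> nat set" where
  "tfv (Var i) = {i}"
| "tfv Root = {}"

fun fv :: "fform \<Rightarrow> nat set" where
  "fv (FEq s t) = tfv s \<union> tfv t"
| "fv (FAdj s t) = tfv s \<union> tfv t"
| "fv (FNeg f) = fv f"
| "fv (FConj f g) = fv f \<union> fv g"
| "fv (FEx i f) = fv f - {i}"

fun troot_free :: "fterm \<Rightarrow> bool" where
  "troot_free (Var i) = True"
| "troot_free Root = False"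

fun graph_formula :: "fform \<Rightarrow> bool" where
  "graph_formula (FEq s t) = (troot_free s \<and> troot_free t)"
| "graph_formula (FAdj s t) = (troot_free s \<and> troot_free t)"
| "graph_formula (FNeg f) = graph_formula f"
| "graph_formula (FConj f g) = (graph_formula f \<and> graph_formula g)"
| "graph_formula (FEx i f) = graph_formula f"

fun teval :: "'v \<Rightarrow> (nat \<Rightarrow> 'v) \<Rightarrow> fterm \<Rightarrow> 'v" where
  "teval r a (Var i) = a i"
| "teval r a Root = r"

fun sat :: "'v set \<Rightarrow> ('v \<Rightarrow> 'v \<Rightarrow> bool) \<Rightarrow> 'v \<Rightarrow> (nat \<Rightarrow> 'v) \<Rightarrow> fform \<Rightarrow> bool" where
  "sat V E r a (FEq s t) = (teval r a s = teval r a t)"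
| "sat V E r a (FAdj s t) = E (teval r a s) (teval r a t)"
| "sat V E r a (FNeg f) = (\<not> sat V E r a f)"
| "sat V E r a (FConj f g) = (sat V E r a f \<and> sat V E r a g)"
| "sat V E r a (FEx i f) = (\<exists>v\<in>V. sat V E r (a(i := v)) f)"

definition is_graph :: "'v set \<Rightarrow> ('v \<Rightarrow> 'v \<Rightarrow> bool) \<Rightarrow> bool" where
  "is_graph V E \<longleftrightarrow> (\<forall>x\<in>V. \<forall>y\<in>V. E x y \<longrightarrow> E y x) \<and> (\<forall>x\<in>V. \<not> E x x)"

text \<open>The definable set phi(G) for a formula whose free variables are among
  x_0,...,x_{p-1}; tuples in V^p are represented as extensional functions on {..<p}.\<close>
definition defset :: "'v set \<Rightarrow> ('v \<Rightarrow> 'v \<Rightarrow> bool) \<Rightarrow> 'v \<Rightarrow> nat \<Rightarrow> fform \<Rightarrow> (nat \<Rightarrow> 'v) set" where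
  "defset V E r p \<phi> = {a \<in> {..<p} \<rightarrow>\<^sub>E V. sat V E r a \<phi>}"

text \<open>Unary definable set phi(G) as a set of vertices (formula with one free variable x_0).\<close>
definition defset1 :: "'v set \<Rightarrow> ('v \<Rightarrow> 'v \<Rightarrow> bool) \<Rightarrow> 'v \<Rightarrow> fform \<Rightarrow> 'v set" where
  "defset1 V E r \<phi> = {v \<in> V. sat V E r (\<lambda>_. v) \<phi>}"

definition stone_fin :: "'v set \<Rightarrow> ('v \<Rightarrow> 'v \<Rightarrow> bool) \<Rightarrow> 'v \<Rightarrow> nat \<Rightarrow> fform \<Rightarrow> real" where
  "stone_fin V E r p \<phi> =
     (if p = 0 then (if sat V E r (\<lambda>_. undefined) \<phi> then 1 else 0)
      else real (card (defset V E r p \<phi>)) / real (card V) ^ p)"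

text \<open>Stone pairing with a (rooted) modeling whose vertex set carries the probability measure M.\<close>
definition stone_mod :: "'b measure \<Rightarrow> ('b \<Rightarrow> 'b \<Rightarrow> bool) \<Rightarrow> 'b \<Rightarrow> nat \<Rightarrow> fform \<Rightarrow> real" where
  "stone_mod M E r p \<phi> =
     (if p = 0 then (if sat (space M) E r (\<lambda>_. undefined) \<phi> then 1 else 0)
      else measure (PiM {..<p} (\<lambda>_. M)) (defset (space M) E r p \<phi>))"

definition standard_borel :: "'b measure \<Rightarrow> bool" where
  "standard_borel M \<longleftrightarrow> (\<exists>T :: 'b topology.
      topspace T = space M \<and> completely_metrizable_space T \<and> separable_space T \<and>
      sets M = sigma_sets (space M) {U. openin T U})"

definition modeling :: "'b measure \<Rightarrow> ('b \<Rightarrow> 'b \<Rightarrow> bool) \<Rightarrow> bool" where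
  "modeling M E \<longleftrightarrow> is_graph (space M) E \<and> prob_space M \<and> standard_borel M \<and>
     (\<forall>p \<phi>. graph_formula \<phi> \<and> fv \<phi> \<subseteq> {..<p} \<longrightarrow>
        defset (space M) E undefined p \<phi> \<in> sets (PiM {..<p} (\<lambda>_. M)))"

definition FO_convergent :: "(nat \<Rightarrow> 'v set) \<Rightarrow> (nat \<Rightarrow> 'v \<Rightarrow> 'v \<Rightarrow> bool) \<Rightarrow> bool" where
  "FO_convergent V E \<longleftrightarrow> (\<forall>p \<phi>. graph_formula \<phi> \<and> fv \<phi> \<subseteq> {..<p} \<longrightarrow>
      convergent (\<lambda>n. stone_fin (V n) (E n) undefined p \<phi>))"

definition modeling_limit :: "(nat \<Rightarrow> 'v set) \<Rightarrow> (nat \<Rightarrow> 'v \<Rightarrow> 'v \<Rightarrow> bool) \<Rightarrow>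
    'b measure \<Rightarrow> ('b \<Rightarrow> 'b \<Rightarrow> bool) \<Rightarrow> bool" where
  "modeling_limit V E M EL \<longleftrightarrow> modeling M EL \<and>
     (\<forall>p \<phi>. graph_formula \<phi> \<and> fv \<phi> \<subseteq> {..<p} \<longrightarrow>
        (\<lambda>n. stone_fin (V n) (E n) undefined p \<phi>) \<longlonglongrightarrow> stone_mod M EL undefined p \<phi>)"

end

theory Submission
  imports Defs
begin

text \<open>The \<open>m\<close>-th power of \<open>\<langle>\<phi>, (G, y)\<rangle>\<close> is the probability that \<open>m\<close> independent
  random \<open>p\<close>-tuples all satisfy \<open>\<phi>(-, y)\<close>. Counting, for a random \<open>mp\<close>-tuple, the roots
  \<open>y \<in> \<xi>(G)\<close> that work for all \<open>m\<close> blocks gives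
  \<open>\<Sum>\<^sub>y \<langle>\<phi>, (G, y)\<rangle>\<^sup>m = \<Sum>\<^sub>j\<^sub>=\<^sub>1\<^sup>k \<langle>\<theta>\<^sub>j, G\<rangle>\<close>, where \<open>k = |\<xi>(G)|\<close> and the unrooted formula
  \<open>\<theta>\<^sub>j\<close> says that at least \<open>j\<close> distinct roots work. So along the sequence every power sum
  converges to the one of \<open>L\<close>, and since \<open>k = |\<xi>(G\<^sub>n)| = |\<xi>(L)|\<close> is fixed, so does the
  maximum of \<open>\<langle>\<phi>, (G\<^sub>n, y)\<rangle>\<close> over \<open>y \<in> \<xi>(G\<^sub>n)\<close>; maximisers \<open>r\<^sub>n\<close> and \<open>r\<close> do the job.\<close>

section \<open>Renaming, big conjunctions and existential blocks\<close>

fun rename_fterm :: "(nat \<Rightarrow> nat) \<Rightarrow> fterm \<Rightarrow> fterm \<Rightarrow> fterm" where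
  "rename_fterm g R (Var i) = Var (g i)"
| "rename_fterm g R Root = R"

fun rename_fform :: "(nat \<Rightarrow> nat) \<Rightarrow> fterm \<Rightarrow> fform \<Rightarrow> fform" where
  "rename_fform g R (FEq s t) = FEq (rename_fterm g R s) (rename_fterm g R t)"
| "rename_fform g R (FAdj s t) = FAdj (rename_fterm g R s) (rename_fterm g R t)"
| "rename_fform g R (FNeg f) = FNeg (rename_fform g R f)"
| "rename_fform g R (FConj f h) = FConj (rename_fform g R f) (rename_fform g R h)"
| "rename_fform g R (FEx i f) = FEx (g i) (rename_fform g R f)"

lemma sat_rename_fform:
  assumes "inj g" and "\<And>z. R = Var z \<Longrightarrow> z \<notin> range g"
  shows "sat V E r a (rename_fform g R \<phi>) = sat V E (teval r a R) (a \<circ> g) \<phi>"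
  using assms(2)
proof (induction \<phi> arbitrary: a)
  case (FEq s t)
  then show ?case by (cases s; cases t) auto
next
  case (FAdj s t)
  then show ?case by (cases s; cases t) auto
next
  case (FEx i f)
  have "teval r (a(g i := v)) R = teval r a R" for v
    using FEx.prems by (cases R) auto
  moreover have "a(g i := v) \<circ> g = (a \<circ> g)(i := v)" for v
    using \<open>inj g\<close> by (auto simp: fun_eq_iff inj_eq)
  ultimately show ?case
    by (simp only: rename_fform.simps sat.simps FEx.IH[OF FEx.prems])
qed auto

lemma fv_rename_fform: "fv (rename_fform g R \<phi>) \<subseteq> g ` fv \<phi> \<union> tfv R"
proof (induction \<phi>)
  case (FEq s t) then show ?case by (cases s; cases t) auto
next
  case (FAdj s t) then show ?case by (cases s; cases t) auto
qed auto

lemma graph_formula_rename_fform: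
  "troot_free R \<or> graph_formula \<phi> \<Longrightarrow> graph_formula (rename_fform g R \<phi>)"
proof (induction \<phi>)
  case (FEq s t) then show ?case by (cases s; cases t) auto
next
  case (FAdj s t) then show ?case by (cases s; cases t) auto
qed auto

lemma sat_cong_fv:
  "(\<And>i. i \<in> fv \<phi> \<Longrightarrow> a i = b i) \<Longrightarrow> sat V E r a \<phi> = sat V E r b \<phi>"
proof (induction \<phi> arbitrary: a b)
  case (FEq s t) then show ?case by (cases s; cases t) auto
next
  case (FAdj s t) then show ?case by (cases s; cases t) auto
next
  case (FNeg f)
  then show ?case by (metis fv.simps(3) sat.simps(3))
next
  case (FConj f h)
  have "sat V E r a f = sat V E r b f" "sat V E r a h = sat V E r b h"
    by (rule FConj.IH; simp add: FConj.prems)+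
  then show ?case by simp
next
  case (FEx i f)
  have "sat V E r (a(i := v)) f = sat V E r (b(i := v)) f" for v
    by (rule FEx.IH) (use FEx.prems in auto)
  then show ?case by simp
qed

lemma sat_graph_formula_root:
  "graph_formula \<phi> \<Longrightarrow> sat V E r a \<phi> = sat V E r' a \<phi>"
proof (induction \<phi> arbitrary: a)
  case (FEq s t) then show ?case by (cases s; cases t) auto
next
  case (FAdj s t) then show ?case by (cases s; cases t) auto
qed auto

definition FTrue :: fform where
  "FTrue = FNeg (FEx 0 (FNeg (FEq (Var 0) (Var 0))))"

lemma FTrue_simps [simp]: "sat V E r a FTrue" "fv FTrue = {}" "graph_formula FTrue"
  by (auto simp: FTrue_def)

definition Conj_list :: "fform list \<Rightarrow> fform" where
  "Conj_list fs = foldr FConj fs FTrue"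

lemma sat_Conj_list: "sat V E r a (Conj_list fs) \<longleftrightarrow> (\<forall>f\<in>set fs. sat V E r a f)"
  by (induction fs) (auto simp: Conj_list_def)

lemma fv_Conj_list: "fv (Conj_list fs) = (\<Union>f\<in>set fs. fv f)"
  by (induction fs) (auto simp: Conj_list_def)

lemma graph_formula_Conj_list: "graph_formula (Conj_list fs) \<longleftrightarrow> (\<forall>f\<in>set fs. graph_formula f)"
  by (induction fs) (auto simp: Conj_list_def)

definition Ex_list :: "nat list \<Rightarrow> fform \<Rightarrow> fform" where
  "Ex_list zs f = foldr FEx zs f"

lemma fv_Ex_list: "fv (Ex_list zs f) = fv f - set zs"
  by (induction zs) (auto simp: Ex_list_def)

lemma graph_formula_Ex_list: "graph_formula (Ex_list zs f) = graph_formula f"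
  by (induction zs) (auto simp: Ex_list_def)

lemma sat_Ex_list:
  "sat V E r a (Ex_list zs f) \<longleftrightarrow> (\<exists>w. w ` set zs \<subseteq> V \<and> sat V E r (override_on a w (set zs)) f)"
proof (induction zs arbitrary: a)
  case Nil
  then show ?case by (simp add: Ex_list_def)
next
  case (Cons z zs)
  have shift: "override_on (a(z := v)) w (set zs) = override_on a (override_on (\<lambda>_. v) w (set zs)) (set (z # zs))"
    for v w by (auto simp: override_on_def fun_eq_iff)
  have unshift: "override_on a w (set (z # zs)) = override_on (a(z := w z)) w (set zs)" for w
    by (auto simp: override_on_def fun_eq_iff)
  show ?case
  proof
    assume "sat V E r a (Ex_list (z # zs) f)"
    then have "\<exists>v\<in>V. sat V E r (a(z := v)) (Ex_list zs f)"
      by (simp add: Ex_list_def)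
    then obtain v w where "v \<in> V" "w ` set zs \<subseteq> V" "sat V E r (override_on (a(z := v)) w (set zs)) f"
      unfolding Cons.IH by blast
    then show "\<exists>w. w ` set (z # zs) \<subseteq> V \<and> sat V E r (override_on a w (set (z # zs))) f"
      unfolding shift by (intro exI[of _ "override_on (\<lambda>_. v) w (set zs)"]) (auto simp: override_on_def)
  next
    assume "\<exists>w. w ` set (z # zs) \<subseteq> V \<and> sat V E r (override_on a w (set (z # zs))) f"
    then show "sat V E r a (Ex_list (z # zs) f)"
      unfolding unshift Ex_list_def foldr.simps o_apply sat.simps Cons.IH[unfolded Ex_list_def] by auto
  qed
qed

section \<open>A formula counting the roots that serve several blocks\<close>

definition block :: "nat \<Rightarrow> nat \<Rightarrow> (nat \<Rightarrow> 'a) \<Rightarrow> nat \<Rightarrow> 'a" where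
  "block p i a = (\<lambda>l\<in>{..<p}. a (i * p + l))"

lemma block_index_less:
  fixes i m l p :: nat
  assumes "i < m" and "l < p"
  shows "i * p + l < m * p"
proof -
  have "Suc i * p \<le> m * p"
    using assms(1) by (intro mult_le_mono1) simp
  then show ?thesis
    using assms(2) by simp
qed

text \<open>Both renamings move every variable they do not need above \<open>B\<close>, so that the
  bound variables of the renamed formula capture none of the variables below \<open>B\<close>.\<close>

definition block_renaming :: "nat \<Rightarrow> nat \<Rightarrow> nat \<Rightarrow> nat \<Rightarrow> nat" where
  "block_renaming p B i l = (if l < p then i * p + l else B + l)"

definition point_renaming :: "nat \<Rightarrow> nat \<Rightarrow> nat \<Rightarrow> nat" where
  "point_renaming B y l = (if l = 0 then y else B + l)"

definition distinct_vars :: "nat \<Rightarrow> nat \<Rightarrow> fform" where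
  "distinct_vars Q j =
     Conj_list [FNeg (FEq (Var (Q + s)) (Var (Q + t))). s \<leftarrow> [0..<j], t \<leftarrow> [0..<j], s \<noteq> t]"

definition root_witness :: "nat \<Rightarrow> nat \<Rightarrow> nat \<Rightarrow> fform \<Rightarrow> fform \<Rightarrow> nat \<Rightarrow> fform" where
  "root_witness p m B \<phi> \<xi> y =
     FConj (rename_fform (point_renaming B y) Root \<xi>)
       (Conj_list [rename_fform (block_renaming p B i) (Var y) \<phi>. i \<leftarrow> [0..<m]])"

text \<open>The variables \<open>x\<^sub>0, \<dots>, x\<^bsub>mp-1\<^esub>\<close> form \<open>m\<close> blocks of \<open>p\<close> variables; the
  formula says that at least \<open>j\<close> distinct roots \<open>x\<^bsub>mp\<^esub>, \<dots>, x\<^bsub>mp+j-1\<^esub>\<close> satisfy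
  \<open>\<xi>\<close> and make every block satisfy \<open>\<phi>\<close>.\<close>

definition at_least_roots :: "nat \<Rightarrow> nat \<Rightarrow> nat \<Rightarrow> fform \<Rightarrow> fform \<Rightarrow> fform" where
  "at_least_roots p m j \<phi> \<xi> =
     Ex_list [m * p..<m * p + j] (FConj (distinct_vars (m * p) j)
       (Conj_list [root_witness p m (m * p + j) \<phi> \<xi> (m * p + t). t \<leftarrow> [0..<j]]))"

lemma sat_distinct_vars: "sat V E r a (distinct_vars Q j) \<longleftrightarrow> inj_on (\<lambda>t. a (Q + t)) {..<j}"
  by (auto simp: distinct_vars_def sat_Conj_list inj_on_def atLeast0LessThan)

lemma sat_root_witness:
  assumes \<xi>: "graph_formula \<xi>" "fv \<xi> \<subseteq> {0}" and \<phi>: "fv \<phi> \<subseteq> {..<p}"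
    and y: "m * p \<le> y" "y < B"
  shows "sat V E r a (root_witness p m B \<phi> \<xi> y) \<longleftrightarrow>
    sat V E undefined (\<lambda>_. a y) \<xi> \<and> (\<forall>i<m. sat V E (a y) (block p i a) \<phi>)"
proof -
  have inj: "inj (point_renaming B y)"
    using y by (auto intro!: injI simp: point_renaming_def split: if_splits)
  have "sat V E r a (rename_fform (point_renaming B y) Root \<xi>) \<longleftrightarrow>
      sat V E r (a \<circ> point_renaming B y) \<xi>"
    using sat_rename_fform[OF inj, of Root] by simp
  also have "\<dots> \<longleftrightarrow> sat V E undefined (a \<circ> point_renaming B y) \<xi>"
    by (rule sat_graph_formula_root[OF \<xi>(1)])
  also have "\<dots> \<longleftrightarrow> sat V E undefined (\<lambda>_. a y) \<xi>"
    using \<xi>(2) by (intro sat_cong_fv) (auto simp: point_renaming_def)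
  finally have root: "sat V E r a (rename_fform (point_renaming B y) Root \<xi>) \<longleftrightarrow>
      sat V E undefined (\<lambda>_. a y) \<xi>" .
  have blocks: "sat V E r a (rename_fform (block_renaming p B i) (Var y) \<phi>) \<longleftrightarrow>
      sat V E (a y) (block p i a) \<phi>" if "i < m" for i
  proof -
    have small: "l < p \<Longrightarrow> i * p + l < y" for l
      using block_index_less[OF that] y(1) by (meson order_less_le_trans)
    have "inj (block_renaming p B i)"
      using small y(2) by (auto intro!: injI simp: block_renaming_def split: if_splits)
    moreover have "y \<notin> range (block_renaming p B i)"
      using small y(2) by (auto simp: block_renaming_def split: if_splits)
    ultimately have "sat V E r a (rename_fform (block_renaming p B i) (Var y) \<phi>) \<longleftrightarrow>
        sat V E (a y) (a \<circ> block_renaming p B i) \<phi>"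
      by (subst sat_rename_fform) auto
    also have "\<dots> \<longleftrightarrow> sat V E (a y) (block p i a) \<phi>"
      using \<phi> by (intro sat_cong_fv) (auto simp: block_renaming_def block_def)
    finally show ?thesis .
  qed
  show ?thesis
    using root blocks by (auto simp: root_witness_def sat_Conj_list)
qed

lemma fv_root_witness:
  assumes "fv \<xi> \<subseteq> {0}" and "fv \<phi> \<subseteq> {..<p}"
  shows "fv (root_witness p m B \<phi> \<xi> y) \<subseteq> {..<m * p} \<union> {y}"
proof -
  have "fv (rename_fform (point_renaming B y) Root \<xi>) \<subseteq> point_renaming B y ` {0}"
    using fv_rename_fform[of "point_renaming B y" Root \<xi>] assms(1) by auto
  moreover have "fv (rename_fform (block_renaming p B i) (Var y) \<phi>) \<subseteq> {..<m * p} \<union> {y}"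
    if "i < m" for i
  proof -
    have "block_renaming p B i ` fv \<phi> \<subseteq> {..<m * p}"
      using assms(2) block_index_less[OF that] by (auto simp: block_renaming_def)
    then show ?thesis
      using fv_rename_fform[of "block_renaming p B i" "Var y" \<phi>] by fastforce
  qed
  ultimately show ?thesis
    by (simp add: root_witness_def fv_Conj_list point_renaming_def UN_subset_iff) blast
qed

lemma fv_at_least_roots:
  assumes "fv \<xi> \<subseteq> {0}" and "fv \<phi> \<subseteq> {..<p}"
  shows "fv (at_least_roots p m j \<phi> \<xi>) \<subseteq> {..<m * p}"
  using fv_root_witness[OF assms]
  by (fastforce simp: at_least_roots_def fv_Ex_list fv_Conj_list distinct_vars_def)

lemma graph_formula_at_least_roots:
  "graph_formula \<xi> \<Longrightarrow> graph_formula (at_least_roots p m j \<phi> \<xi>)"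
  by (auto simp: at_least_roots_def root_witness_def distinct_vars_def graph_formula_Ex_list
      graph_formula_Conj_list intro!: graph_formula_rename_fform)

lemma ex_inj_on_lessThan_iff_le_card:
  assumes "finite S"
  shows "(\<exists>f. inj_on f {..<j} \<and> f ` {..<j} \<subseteq> S) \<longleftrightarrow> j \<le> card S"
  using card_inj_on_le[of _ "{..<j}" S] card_le_inj[of "{..<j}" S] assms by auto

lemma sat_at_least_roots:
  assumes \<xi>: "graph_formula \<xi>" "fv \<xi> \<subseteq> {0}" and \<phi>: "fv \<phi> \<subseteq> {..<p}"
    and fin: "finite (defset1 V E undefined \<xi>)"
  shows "sat V E r a (at_least_roots p m j \<phi> \<xi>) \<longleftrightarrow>
    j \<le> card {y \<in> defset1 V E undefined \<xi>. \<forall>i<m. sat V E y (block p i a) \<phi>}"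
    (is "_ \<longleftrightarrow> j \<le> card ?S")
proof -
  define Q where "Q = m * p"
  let ?good = "\<lambda>y. sat V E undefined (\<lambda>_. y) \<xi> \<and> (\<forall>i<m. sat V E y (block p i a) \<phi>)"
  have unchanged: "block p i (override_on a w {Q..<Q + j}) = block p i a" if "i < m" for i w
    using block_index_less[OF that, of _ p] unfolding block_def override_on_def Q_def
    by (intro restrict_ext) (metis atLeastLessThan_iff leD lessThan_iff)
  have at_root: "override_on a w {Q..<Q + j} (Q + t) = w (Q + t)" if "t < j" for t w
    using that by simp
  then have inj_roots: "inj_on (\<lambda>t. override_on a w {Q..<Q + j} (Q + t)) {..<j} \<longleftrightarrow>
      inj_on (\<lambda>t. w (Q + t)) {..<j}" for w
    by (intro inj_on_cong) simp
  have "sat V E r a (at_least_roots p m j \<phi> \<xi>) \<longleftrightarrow>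
      (\<exists>w. w ` {Q..<Q + j} \<subseteq> V \<and> inj_on (\<lambda>t. w (Q + t)) {..<j} \<and> (\<forall>t<j. ?good (w (Q + t))))"
    unfolding at_least_roots_def sat_Ex_list Q_def[symmetric]
    by (simp add: sat_distinct_vars sat_Conj_list sat_root_witness[OF \<xi> \<phi>] unchanged at_root
        inj_roots atLeast0LessThan Q_def[symmetric]) (simp add: Ball_def)
  also have "\<dots> \<longleftrightarrow> (\<exists>f. inj_on f {..<j} \<and> f ` {..<j} \<subseteq> ?S)"
  proof
    assume "\<exists>w. w ` {Q..<Q + j} \<subseteq> V \<and> inj_on (\<lambda>t. w (Q + t)) {..<j} \<and> (\<forall>t<j. ?good (w (Q + t)))"
    then obtain w where "w ` {Q..<Q + j} \<subseteq> V" "inj_on (\<lambda>t. w (Q + t)) {..<j}" "\<forall>t<j. ?good (w (Q + t))"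
      by blast
    then show "\<exists>f. inj_on f {..<j} \<and> f ` {..<j} \<subseteq> ?S"
      by (intro exI[of _ "\<lambda>t. w (Q + t)"]) (auto simp: defset1_def)
  next
    assume "\<exists>f. inj_on f {..<j} \<and> f ` {..<j} \<subseteq> ?S"
    then obtain f where "inj_on f {..<j}" "f ` {..<j} \<subseteq> ?S"
      by blast
    then show "\<exists>w. w ` {Q..<Q + j} \<subseteq> V \<and> inj_on (\<lambda>t. w (Q + t)) {..<j} \<and> (\<forall>t<j. ?good (w (Q + t)))"
      by (intro exI[of _ "\<lambda>z. f (z - Q)"]) (auto simp: defset1_def image_subset_iff)
  qed
  also have "\<dots> \<longleftrightarrow> j \<le> card ?S"
    using fin by (intro ex_inj_on_lessThan_iff_le_card) auto
  finally show ?thesis .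
qed

section \<open>Independent blocks of coordinates\<close>

lemma indep_vars_PiM_coordinates:
  assumes N: "prob_space N" and fin: "finite I"
  shows "prob_space.indep_vars (PiM I (\<lambda>_. N)) (\<lambda>_. N) (\<lambda>i \<omega>. \<omega> i) I"
proof -
  interpret P: prob_space "PiM I (\<lambda>_. N)"
    by (intro prob_space_PiM N)
  show ?thesis
  proof (cases "I = {}")
    case True
    then show ?thesis
      unfolding P.indep_vars_def by (intro conjI ballI P.indep_setsI) auto
  next
    case False
    have "distr (PiM I (\<lambda>_. N)) (PiM I (\<lambda>_. N)) (\<lambda>x. \<lambda>i\<in>I. x i) =
        distr (PiM I (\<lambda>_. N)) (PiM I (\<lambda>_. N)) (\<lambda>x. x)"
      by (rule distr_cong) (auto simp: space_PiM)
    also have "\<dots> = PiM I (\<lambda>i. distr (PiM I (\<lambda>_. N)) N (\<lambda>\<omega>. \<omega> i))"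
      using distr_PiM_component[of I "\<lambda>_. N"] N fin by (auto intro!: PiM_cong)
    finally show ?thesis
      using False by (subst P.indep_vars_iff_distr_eq_PiM') auto
  qed
qed

lemma block_measurable:
  "i < m \<Longrightarrow> block p i \<in> measurable (PiM {..<m * p} (\<lambda>_. N)) (PiM {..<p} (\<lambda>_. N))"
  unfolding block_def
  by (intro measurable_restrict measurable_component_singleton) (auto intro: block_index_less)

lemma distr_block_PiM:
  assumes "prob_space N" and "i < m"
  shows "distr (PiM {..<m * p} (\<lambda>_. N)) (PiM {..<p} (\<lambda>_. N)) (block p i) = PiM {..<p} (\<lambda>_. N)"
  unfolding block_def
  using distr_PiM_reindex[of "{..<m * p}" "\<lambda>_. N" "\<lambda>l. i * p + l" "{..<p}"] assms
    block_index_less[OF assms(2)]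
  by (auto simp: inj_on_def)

lemma indep_vars_block:
  assumes N: "prob_space N"
  shows "prob_space.indep_vars (PiM {..<m * p} (\<lambda>_. N)) (\<lambda>_. PiM {..<p} (\<lambda>_. N)) (block p) {..<m}"
proof -
  interpret P: prob_space "PiM {..<m * p} (\<lambda>_. N)"
    by (intro prob_space_PiM N)
  define K where "K i = (\<lambda>l. i * p + l) ` {..<p}" for i
  have K: "K i \<subseteq> {..<m * p}" if "i \<in> {..<m}" for i
    using block_index_less[of i m] that by (auto simp: K_def)
  have disj: "disjoint_family_on K {..<m}"
    unfolding disjoint_family_on_def
  proof (intro ballI impI)
    fix i j :: nat assume "i \<noteq> j"
    have "i * p + l \<noteq> j * p + l'" if "l < p" "l' < p" for l l'
    proof
      assume "i * p + l = j * p + l'"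
      then have "(i * p + l) div p = (j * p + l') div p" by simp
      with that \<open>i \<noteq> j\<close> show False by simp
    qed
    then show "K i \<inter> K j = {}"
      by (auto simp: K_def)
  qed
  have "P.indep_vars (\<lambda>i. PiM (K i) (\<lambda>_. N)) (\<lambda>i \<omega>. \<lambda>l\<in>K i. \<omega> l) {..<m}"
    using P.indep_vars_restrict[OF indep_vars_PiM_coordinates[OF N] K disj] by simp
  moreover have "(\<lambda>x. \<lambda>l\<in>{..<p}. x (i * p + l)) \<in> measurable (PiM (K i) (\<lambda>_. N)) (PiM {..<p} (\<lambda>_. N))"
    for i
    by (intro measurable_restrict measurable_component_singleton) (auto simp: K_def)
  ultimately have "P.indep_vars (\<lambda>_. PiM {..<p} (\<lambda>_. N))
      (\<lambda>i \<omega>. \<lambda>l\<in>{..<p}. (\<lambda>l\<in>K i. \<omega> l) (i * p + l)) {..<m}"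
    by (rule P.indep_vars_compose2)
  moreover have "(\<lambda>i \<omega>. \<lambda>l\<in>{..<p}. (\<lambda>l\<in>K i. \<omega> l) (i * p + l)) = block p"
    by (auto simp: fun_eq_iff block_def K_def)
  ultimately show ?thesis
    by metis
qed

lemma measure_block_preimages:
  assumes N: "prob_space N" and "m \<ge> 1" and A: "A \<in> sets (PiM {..<p} (\<lambda>_. N))"
  defines "P \<equiv> PiM {..<m * p} (\<lambda>_. N)"
  shows "(\<Inter>i<m. block p i -` A \<inter> space P) \<in> sets P"
    and "measure P (\<Inter>i<m. block p i -` A \<inter> space P) = measure (PiM {..<p} (\<lambda>_. N)) A ^ m"
proof -
  interpret P: prob_space P
    unfolding P_def by (intro prob_space_PiM N)
  have ne: "{..<m} \<noteq> {}"
    using \<open>m \<ge> 1\<close> by (simp add: lessThan_empty_iff)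
  show "(\<Inter>i<m. block p i -` A \<inter> space P) \<in> sets P"
    using ne A unfolding P_def by (intro sets.finite_INT) (auto intro!: measurable_sets block_measurable)
  have "measure P (\<Inter>i<m. block p i -` A \<inter> space P) = (\<Prod>i<m. measure P (block p i -` A \<inter> space P))"
    using indep_vars_block[OF N, of m p, folded P_def] ne A by (intro P.indep_varsD) auto
  also have "\<dots> = (\<Prod>i<m. measure (PiM {..<p} (\<lambda>_. N)) A)"
  proof (intro prod.cong refl)
    fix i assume "i \<in> {..<m}"
    then have "measure P (block p i -` A \<inter> space P) =
        measure (distr P (PiM {..<p} (\<lambda>_. N)) (block p i)) A"
      using A unfolding P_def by (intro measure_distr[symmetric] block_measurable) auto
    also have "\<dots> = measure (PiM {..<p} (\<lambda>_. N)) A"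
      using \<open>i \<in> {..<m}\<close> unfolding P_def by (simp add: distr_block_PiM[OF N])
    finally show "measure P (block p i -` A \<inter> space P) = measure (PiM {..<p} (\<lambda>_. N)) A" .
  qed
  finally show "measure P (\<Inter>i<m. block p i -` A \<inter> space P) = measure (PiM {..<p} (\<lambda>_. N)) A ^ m"
    by simp
qed

section \<open>Stone pairings as measures of definable sets\<close>

definition definable_measurable :: "'b measure \<Rightarrow> ('b \<Rightarrow> 'b \<Rightarrow> bool) \<Rightarrow> bool" where
  "definable_measurable N E \<longleftrightarrow> (\<forall>q \<psi>. graph_formula \<psi> \<and> fv \<psi> \<subseteq> {..<q} \<longrightarrow>
     defset (space N) E undefined q \<psi> \<in> sets (PiM {..<q} (\<lambda>_. N)))"

lemma sets_PiM_uniform_count_measure: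
  assumes "finite V" and "S \<subseteq> {..<q::nat} \<rightarrow>\<^sub>E V"
  shows "S \<in> sets (PiM {..<q} (\<lambda>_. uniform_count_measure V))"
proof -
  have "{x} \<in> sets (PiM {..<q} (\<lambda>_. uniform_count_measure V))" if "x \<in> {..<q} \<rightarrow>\<^sub>E V" for x
  proof -
    have "{x} = PiE {..<q} (\<lambda>i. {x i})"
      using that by (auto simp: PiE_iff fun_eq_iff extensional_def) (metis lessThan_iff)
    also have "\<dots> \<in> sets (PiM {..<q} (\<lambda>_. uniform_count_measure V))"
      using that by (intro sets_PiM_I_finite) (auto simp: sets_uniform_count_measure)
    finally show ?thesis .
  qed
  moreover have "finite S"
    using assms by (meson finite_PiE finite_lessThan finite_subset)
  ultimately have "(\<Union>x\<in>S. {x}) \<in> sets (PiM {..<q} (\<lambda>_. uniform_count_measure V))"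
    using assms(2) by (intro sets.finite_UN) auto
  then show ?thesis
    by simp
qed

lemma definable_measurable_uniform_count_measure:
  "finite V \<Longrightarrow> definable_measurable (uniform_count_measure V) E"
  by (auto simp: definable_measurable_def space_uniform_count_measure defset_def
      intro!: sets_PiM_uniform_count_measure)

lemma measure_PiM_uniform_count_measure:
  assumes fin: "finite V" and ne: "V \<noteq> {}" and S: "S \<subseteq> {..<q::nat} \<rightarrow>\<^sub>E V"
  shows "measure (PiM {..<q} (\<lambda>_. uniform_count_measure V)) S = real (card S) / real (card V) ^ q"
proof -
  let ?U = "uniform_count_measure V"
  let ?P = "PiM {..<q} (\<lambda>_. ?U)"
  have U: "prob_space ?U"
    by (rule prob_space_uniform_count_measure[OF fin ne])
  interpret PS: finite_product_sigma_finite "\<lambda>_. ?U" "{..<q}"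
    by (intro finite_product_sigma_finite.intro product_sigma_finite.intro
        finite_product_sigma_finite_axioms.intro prob_space_imp_sigma_finite U) simp
  interpret P: prob_space ?P
    by (intro prob_space_PiM U)
  have point: "measure ?P {x} = (1 / real (card V)) ^ q" if "x \<in> {..<q} \<rightarrow>\<^sub>E V" for x
  proof -
    have "{x} = PiE {..<q} (\<lambda>i. {x i})"
      using that by (auto simp: PiE_iff fun_eq_iff extensional_def) (metis lessThan_iff)
    then have "emeasure ?P {x} = (\<Prod>i<q. emeasure ?U {x i})"
      using that by (simp only:) (intro PS.measure_times, auto simp: sets_uniform_count_measure)
    also have "\<dots> = ennreal ((1 / real (card V)) ^ q)"
      using that fin by (simp add: emeasure_uniform_count_measure PiE_iff ennreal_power)
    finally show ?thesis
      by (simp add: measure_def)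
  qed
  have "finite S"
    using S fin by (meson finite_PiE finite_lessThan finite_subset)
  then have "measure ?P S = (\<Sum>x\<in>S. measure ?P {x})"
    using S by (intro measure_eq_sum_singleton) (auto intro!: sets_PiM_uniform_count_measure[OF fin])
  also have "\<dots> = real (card S) / real (card V) ^ q"
    using S by (simp add: point subset_iff power_one_over)
  finally show ?thesis .
qed

lemma stone_fin_eq_stone_mod_uniform_count_measure:
  assumes "finite V" and "V \<noteq> {}"
  shows "stone_fin V E r p \<phi> = stone_mod (uniform_count_measure V) E r p \<phi>"
  using measure_PiM_uniform_count_measure[OF assms, of "defset V E r p \<phi>" p]
  by (auto simp: stone_fin_def stone_mod_def space_uniform_count_measure defset_def)

lemma stone_mod_eq_measure:
  assumes "prob_space N"
  shows "stone_mod N E r p \<phi> = measure (PiM {..<p} (\<lambda>_. N)) (defset (space N) E r p \<phi>)"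
proof (cases "p = 0")
  case True
  then have "defset (space N) E r p \<phi> =
      (if sat (space N) E r (\<lambda>_. undefined) \<phi> then {\<lambda>_. undefined} else {})"
    by (auto simp: defset_def)
  with True show ?thesis
    by (simp add: stone_mod_def PiM_empty measure_count_space)
qed (simp add: stone_mod_def)

text \<open>A rooted definable set is a section, at the root, of the unrooted definable set
  obtained by turning the root into the extra free variable \<open>x\<^sub>p\<close>.\<close>

lemma defset_rooted_measurable:
  assumes meas: "definable_measurable N E" and \<phi>: "fv \<phi> \<subseteq> {..<p}" and y: "y \<in> space N"
  shows "defset (space N) E y p \<phi> \<in> sets (PiM {..<p} (\<lambda>_. N))"
proof -
  define g where "g l = (if l < p then l else Suc p + l)" for l
  define \<psi> where "\<psi> = rename_fform g (Var p) \<phi>"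
  define F where "F x = (\<lambda>i\<in>{..<Suc p}. if i = p then y else x i)" for x :: "nat \<Rightarrow> 'a"
  have "inj g" and "p \<notin> range g"
    by (auto intro!: injI simp: g_def split: if_splits)
  then have sat_\<psi>: "sat (space N) E undefined (F x) \<psi> \<longleftrightarrow> sat (space N) E y x \<phi>" for x
    unfolding \<psi>_def using \<phi>
    by (subst sat_rename_fform) (auto simp: F_def g_def intro!: sat_cong_fv)
  have F_in: "F x \<in> {..<Suc p} \<rightarrow>\<^sub>E space N" if "x \<in> {..<p} \<rightarrow>\<^sub>E space N" for x
    using that y by (auto simp: F_def PiE_def Pi_def)
  have "fv \<psi> \<subseteq> {..<Suc p}"
    using fv_rename_fform[of g "Var p" \<phi>] \<phi> by (auto simp: \<psi>_def g_def)
  moreover have "graph_formula \<psi>"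
    unfolding \<psi>_def by (rule graph_formula_rename_fform) simp
  ultimately have D: "defset (space N) E undefined (Suc p) \<psi> \<in> sets (PiM {..<Suc p} (\<lambda>_. N))"
    using meas by (simp add: definable_measurable_def)
  have "F \<in> measurable (PiM {..<p} (\<lambda>_. N)) (PiM {..<Suc p} (\<lambda>_. N))"
    unfolding F_def
  proof (intro measurable_restrict)
    fix i
    show "(\<lambda>x. if i = p then y else x i) \<in> measurable (PiM {..<p} (\<lambda>_. N)) N" if "i \<in> {..<Suc p}"
      using that y by (cases "i = p") auto
  qed
  then have "F -` defset (space N) E undefined (Suc p) \<psi> \<inter> space (PiM {..<p} (\<lambda>_. N))
      \<in> sets (PiM {..<p} (\<lambda>_. N))"
    using D by (rule measurable_sets)
  also have "F -` defset (space N) E undefined (Suc p) \<psi> \<inter> space (PiM {..<p} (\<lambda>_. N)) =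
      defset (space N) E y p \<phi>"
    using F_in sat_\<psi> by (auto simp: defset_def space_PiM)
  finally show ?thesis .
qed

section \<open>Power sums of rooted Stone pairings\<close>

text \<open>Both sides are the integral of the number of roots that work for all \<open>m\<close> blocks.\<close>

lemma sum_power_stone_mod:
  assumes N: "prob_space N" and meas: "definable_measurable N E"
    and \<xi>: "graph_formula \<xi>" "fv \<xi> \<subseteq> {0}" and fin: "finite (defset1 (space N) E undefined \<xi>)"
    and \<phi>: "fv \<phi> \<subseteq> {..<p}" and m: "m \<ge> 1"
  shows "(\<Sum>y\<in>defset1 (space N) E undefined \<xi>. stone_mod N E y p \<phi> ^ m) =
    (\<Sum>j=1..card (defset1 (space N) E undefined \<xi>).
      stone_mod N E undefined (m * p) (at_least_roots p m j \<phi> \<xi>))"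
proof -
  define X where "X = defset1 (space N) E undefined \<xi>"
  define P where "P = PiM {..<m * p} (\<lambda>_. N)"
  define roots where "roots a = {y \<in> X. \<forall>i<m. sat (space N) E y (block p i a) \<phi>}" for a
  define A where "A y = defset (space N) E y p \<phi>" for y
  define B where "B y = (\<Inter>i<m. block p i -` A y \<inter> space P)" for y
  define T where "T j = defset (space N) E undefined (m * p) (at_least_roots p m j \<phi> \<xi>)" for j
  interpret P: prob_space P
    unfolding P_def by (intro prob_space_PiM N)
  have A_sets: "A y \<in> sets (PiM {..<p} (\<lambda>_. N))" if "y \<in> X" for y
    using defset_rooted_measurable[OF meas \<phi>] that by (auto simp: A_def X_def defset1_def)
  have B_sets: "B y \<in> sets P" if "y \<in> X" for y
    using measure_block_preimages(1)[OF N m A_sets[OF that]] by (simp add: B_def P_def)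
  have T_sets: "T j \<in> sets P" for j
    using meas graph_formula_at_least_roots[OF \<xi>(1)] fv_at_least_roots[OF \<xi>(2) \<phi>]
    by (simp add: definable_measurable_def T_def P_def)
  have count_T: "(\<Sum>j=1..card X. indicator (T j) a) = real (card (roots a))" if "a \<in> space P" for a
  proof -
    have mem: "a \<in> T j \<longleftrightarrow> j \<le> card (roots a)" for j
      using that sat_at_least_roots[OF \<xi> \<phi> fin]
      by (simp add: T_def P_def defset_def space_PiM roots_def X_def)
    have "card (roots a) \<le> card X"
      unfolding roots_def X_def using fin by (intro card_mono) auto
    then have "{1..card X} \<inter> {j. j \<le> card (roots a)} = {1..card (roots a)}"
      by auto
    then show ?thesis
      by (simp add: indicator_def mem sum.If_cases)
  qed
  have count_B: "(\<Sum>y\<in>X. indicator (B y) a) = real (card (roots a))" if "a \<in> space P" for a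
  proof -
    have "block p i a \<in> space (PiM {..<p} (\<lambda>_. N))" if "i < m" for i
      using block_measurable[OF that] \<open>a \<in> space P\<close> unfolding P_def by (rule measurable_space)
    then have "{y \<in> X. a \<in> B y} = roots a"
      using that by (auto simp: B_def A_def roots_def defset_def space_PiM)
    then show ?thesis
      using fin by (simp add: indicator_def sum.If_cases Int_def X_def[symmetric])
  qed
  have integrable: "integrable P (indicator S :: _ \<Rightarrow> real)" if "S \<in> sets P" for S
    using that by (simp add: less_top[symmetric])
  have "(\<Sum>j=1..card X. measure P (T j)) = (\<Sum>j=1..card X. integral\<^sup>L P (indicator (T j)))"
    using T_sets by (simp add: Int_absorb2 sets.sets_into_space)
  also have "\<dots> = integral\<^sup>L P (\<lambda>a. \<Sum>j=1..card X. indicator (T j) a)"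
    by (rule Bochner_Integration.integral_sum[symmetric]) (simp add: integrable T_sets)
  also have "\<dots> = integral\<^sup>L P (\<lambda>a. \<Sum>y\<in>X. indicator (B y) a)"
    by (intro Bochner_Integration.integral_cong refl) (simp only: count_T count_B)
  also have "\<dots> = (\<Sum>y\<in>X. integral\<^sup>L P (indicator (B y)))"
    by (rule Bochner_Integration.integral_sum) (simp add: integrable B_sets)
  also have "\<dots> = (\<Sum>y\<in>X. measure P (B y))"
    using B_sets by (simp add: Int_absorb2 sets.sets_into_space)
  also have "\<dots> = (\<Sum>y\<in>X. measure (PiM {..<p} (\<lambda>_. N)) (A y) ^ m)"
    using measure_block_preimages(2)[OF N m A_sets] by (simp add: B_def P_def)
  finally show ?thesis
    by (simp add: stone_mod_eq_measure[OF N] X_def P_def A_def T_def)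
qed

lemma sum_power_stone_fin:
  assumes V: "finite V" "V \<noteq> {}"
    and \<xi>: "graph_formula \<xi>" "fv \<xi> \<subseteq> {0}" and \<phi>: "fv \<phi> \<subseteq> {..<p}" and m: "m \<ge> 1"
  shows "(\<Sum>y\<in>defset1 V E undefined \<xi>. stone_fin V E y p \<phi> ^ m) =
    (\<Sum>j=1..card (defset1 V E undefined \<xi>). stone_fin V E undefined (m * p) (at_least_roots p m j \<phi> \<xi>))"
proof -
  have "finite (defset1 (space (uniform_count_measure V)) E undefined \<xi>)"
    using V by (simp add: defset1_def space_uniform_count_measure)
  from sum_power_stone_mod[OF prob_space_uniform_count_measure[OF V]
      definable_measurable_uniform_count_measure[OF V(1)] \<xi> this \<phi> m]
  show ?thesis
    by (simp only: space_uniform_count_measure stone_fin_eq_stone_mod_uniform_count_measure[OF V])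
qed

section \<open>Recovering a maximum from power sums\<close>

lemma Max_power_le_sum_power:
  fixes f :: "'a \<Rightarrow> real"
  assumes "finite Y" and "Y \<noteq> {}" and "\<And>y. y \<in> Y \<Longrightarrow> f y \<ge> 0"
  shows "Max (f ` Y) ^ m \<le> (\<Sum>y\<in>Y. f y ^ m)"
proof -
  have "Max (f ` Y) \<in> f ` Y"
    using assms(1,2) by (intro Max_in) auto
  then obtain y0 where "y0 \<in> Y" and "Max (f ` Y) = f y0"
    by blast
  then show ?thesis
    using assms by (auto intro: member_le_sum)
qed

lemma sum_power_le_card_Max_power:
  fixes f :: "'a \<Rightarrow> real"
  assumes "finite Y" and "\<And>y. y \<in> Y \<Longrightarrow> f y \<ge> 0"
  shows "(\<Sum>y\<in>Y. f y ^ m) \<le> real (card Y) * Max (f ` Y) ^ m"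
proof -
  have "(\<Sum>y\<in>Y. f y ^ m) \<le> (\<Sum>y\<in>Y. Max (f ` Y) ^ m)"
    using assms by (intro sum_mono power_mono) auto
  then show ?thesis
    by simp
qed

lemma ex_power_gap:
  fixes x y k :: real
  assumes "0 \<le> x" and "x < y" and "k \<ge> 1"
  shows "\<exists>m\<ge>1. k * x ^ m < y ^ m"
proof -
  obtain n where n: "(x / y) ^ n < 1 / k"
    using real_arch_pow_inv[of "1 / k" "x / y"] assms by auto
  have "n \<noteq> 0"
  proof
    assume "n = 0"
    with n have "1 < 1 / k"
      by simp
    with assms(3) show False
      by simp
  qed
  moreover have "k * x ^ n < y ^ n"
    using n assms by (simp add: power_divide field_simps)
  ultimately show ?thesis
    by (intro exI[of _ n]) auto
qed

text \<open>The maximum of \<open>k\<close> nonnegative numbers lies between the \<open>m\<close>-th root of their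
  \<open>m\<close>-th power sum and \<open>k\<^bsup>1/m\<^esup>\<close> times it; as \<open>k\<^bsup>1/m\<^esup> \<rightarrow> 1\<close>, the power sums
  determine the maximum, and their convergence for every \<open>m\<close> gives its convergence.\<close>

lemma tendsto_Max_of_sum_powers:
  fixes b :: "nat \<Rightarrow> 'a \<Rightarrow> real" and a :: "'b \<Rightarrow> real"
  assumes fin_Y: "\<And>n. finite (Y n)" and fin: "finite X" and ne: "X \<noteq> {}"
    and card: "\<And>n. card (Y n) = card X"
    and b_nonneg: "\<And>n y. y \<in> Y n \<Longrightarrow> b n y \<ge> 0" and a_nonneg: "\<And>y. y \<in> X \<Longrightarrow> a y \<ge> 0"
    and conv: "\<And>m. m \<ge> 1 \<Longrightarrow> (\<lambda>n. \<Sum>y\<in>Y n. b n y ^ m) \<longlonglongrightarrow> (\<Sum>y\<in>X. a y ^ m)"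
  shows "(\<lambda>n. Max (b n ` Y n)) \<longlonglongrightarrow> Max (a ` X)"
proof (rule order_tendstoI)
  define k where "k = real (card X)"
  have k: "k \<ge> 1"
    using fin ne by (simp add: k_def Suc_le_eq card_gt_0_iff)
  have ne_Y: "Y n \<noteq> {}" for n
    using card[of n] fin ne by auto
  have A: "Max (a ` X) \<ge> 0"
    using fin ne a_nonneg by (meson Max_ge_iff ex_in_conv finite_imageI image_is_empty imageI)
  have B: "Max (b n ` Y n) \<ge> 0" for n
    using fin_Y ne_Y b_nonneg by (meson Max_ge_iff ex_in_conv finite_imageI image_is_empty imageI)
  fix c
  show "\<forall>\<^sub>F n in sequentially. Max (b n ` Y n) < c" if c: "Max (a ` X) < c"
  proof -
    obtain m where m: "m \<ge> 1" "k * Max (a ` X) ^ m < c ^ m"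
      using ex_power_gap[OF A c k] by blast
    then have "(\<Sum>y\<in>X. a y ^ m) < c ^ m"
      using sum_power_le_card_Max_power[where f=a and m=m, OF fin a_nonneg] by (simp add: k_def)
    then have "\<forall>\<^sub>F n in sequentially. (\<Sum>y\<in>Y n. b n y ^ m) < c ^ m"
      by (rule order_tendstoD(2)[OF conv[OF m(1)]])
    then show ?thesis
    proof (rule eventually_mono)
      fix n
      assume "(\<Sum>y\<in>Y n. b n y ^ m) < c ^ m"
      then have "Max (b n ` Y n) ^ m < c ^ m"
        using Max_power_le_sum_power[where Y="Y n" and f="b n" and m=m, OF fin_Y ne_Y b_nonneg] by linarith
      then show "Max (b n ` Y n) < c"
        by (rule power_less_imp_less_base) (use A c in linarith)
    qed
  qed
  show "\<forall>\<^sub>F n in sequentially. c < Max (b n ` Y n)" if c: "c < Max (a ` X)"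
  proof (cases "c < 0")
    case True
    then show ?thesis
      using B by (simp add: order_less_le_trans)
  next
    case False
    then obtain m where m: "m \<ge> 1" "k * c ^ m < Max (a ` X) ^ m"
      using ex_power_gap[OF _ c k] by force
    then have "k * c ^ m < (\<Sum>y\<in>X. a y ^ m)"
      using Max_power_le_sum_power[where f=a and m=m, OF fin ne a_nonneg] by linarith
    then have "\<forall>\<^sub>F n in sequentially. k * c ^ m < (\<Sum>y\<in>Y n. b n y ^ m)"
      by (rule order_tendstoD(1)[OF conv[OF m(1)]])
    then show ?thesis
    proof (rule eventually_mono)
      fix n
      assume "k * c ^ m < (\<Sum>y\<in>Y n. b n y ^ m)"
      then have "k * c ^ m < k * Max (b n ` Y n) ^ m"
        using sum_power_le_card_Max_power[where Y="Y n" and f="b n" and m=m, OF fin_Y b_nonneg] card[of n] by (simp add: k_def)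
      then have "c ^ m < Max (b n ` Y n) ^ m"
        using k by simp
      then show "c < Max (b n ` Y n)"
        by (rule power_less_imp_less_base) (rule B)
    qed
  qed
qed

lemma tendsto_sum_power_stone:
  assumes V: "\<And>n. finite (V n)" "\<And>n. V n \<noteq> {}" and lim: "modeling_limit V E M EL"
    and \<xi>: "graph_formula \<xi>" "fv \<xi> \<subseteq> {0}" and fin: "finite (defset1 (space M) EL undefined \<xi>)"
    and card: "\<And>n. card (defset1 (V n) (E n) undefined \<xi>) = card (defset1 (space M) EL undefined \<xi>)"
    and \<phi>: "fv \<phi> \<subseteq> {..<p}" and m: "m \<ge> 1"
  shows "(\<lambda>n. \<Sum>y\<in>defset1 (V n) (E n) undefined \<xi>. stone_fin (V n) (E n) y p \<phi> ^ m)
    \<longlonglongrightarrow> (\<Sum>y\<in>defset1 (space M) EL undefined \<xi>. stone_mod M EL y p \<phi> ^ m)"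
proof -
  have M: "prob_space M" "definable_measurable M EL"
    using lim by (auto simp: modeling_limit_def modeling_def definable_measurable_def)
  have "(\<lambda>n. \<Sum>j=1..card (defset1 (space M) EL undefined \<xi>).
      stone_fin (V n) (E n) undefined (m * p) (at_least_roots p m j \<phi> \<xi>))
    \<longlonglongrightarrow> (\<Sum>j=1..card (defset1 (space M) EL undefined \<xi>).
      stone_mod M EL undefined (m * p) (at_least_roots p m j \<phi> \<xi>))"
    using lim graph_formula_at_least_roots[OF \<xi>(1)] fv_at_least_roots[OF \<xi>(2) \<phi>]
    by (intro tendsto_sum) (simp add: modeling_limit_def)
  then show ?thesis
    using V card
    by (simp add: sum_power_stone_fin[OF _ _ \<xi> \<phi> m] sum_power_stone_mod[OF M \<xi> fin \<phi> m])
qed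

theorem lemma3:
  fixes V :: "nat \<Rightarrow> 'v set" and E :: "nat \<Rightarrow> 'v \<Rightarrow> 'v \<Rightarrow> bool"
    and M :: "'b measure" and EL :: "'b \<Rightarrow> 'b \<Rightarrow> bool" and \<xi> :: fform
  assumes graphs: "\<And>n. finite (V n) \<and> V n \<noteq> {} \<and> is_graph (V n) (E n)"
    and conv: "FO_convergent V E"
    and lim: "modeling_limit V E M EL"
    and xi_form: "graph_formula \<xi>" "fv \<xi> \<subseteq> {0}"
    and xi_fin: "finite (defset1 (space M) EL undefined \<xi>)"
    and xi_ne: "defset1 (space M) EL undefined \<xi> \<noteq> {}"
    and xi_min: "\<And>chi. graph_formula chi \<Longrightarrow> fv chi \<subseteq> {0} \<Longrightarrow>
        defset1 (space M) EL undefined chi \<subseteq> defset1 (space M) EL undefined \<xi> \<Longrightarrow>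
        defset1 (space M) EL undefined chi = {} \<or>
        defset1 (space M) EL undefined chi = defset1 (space M) EL undefined \<xi>"
    and xi_card: "\<And>n. card (defset1 (V n) (E n) undefined \<xi>) = card (defset1 (space M) EL undefined \<xi>)"
  shows "\<forall>p \<phi>. fv \<phi> \<subseteq> {..<p} \<longrightarrow>
    (\<exists>rs r. (\<forall>n. rs n \<in> defset1 (V n) (E n) undefined \<xi>) \<and>
            r \<in> defset1 (space M) EL undefined \<xi> \<and>
            (\<lambda>n. stone_fin (V n) (E n) (rs n) p \<phi>) \<longlonglongrightarrow> stone_mod M EL r p \<phi>)"
proof (intro allI impI)
  fix p \<phi>
  assume \<phi>: "fv \<phi> \<subseteq> {..<p}"
  define X where "X = defset1 (space M) EL undefined \<xi>"
  define Y where "Y n = defset1 (V n) (E n) undefined \<xi>" for n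
  define a where "a y = stone_mod M EL y p \<phi>" for y
  define b where "b n y = stone_fin (V n) (E n) y p \<phi>" for n y
  have fin_Y: "finite (Y n)" for n
    using graphs[of n] by (simp add: Y_def defset1_def)
  have ne_Y: "Y n \<noteq> {}" for n
    using xi_card[of n] xi_fin xi_ne by (auto simp: Y_def)
  have "\<exists>y. y \<in> Y n \<and> Max (b n ` Y n) = b n y" for n
    by (rule obtains_MAX[where f="b n", OF fin_Y ne_Y]) blast
  then obtain rs where rs: "\<And>n. rs n \<in> Y n" "\<And>n. Max (b n ` Y n) = b n (rs n)"
    by metis
  obtain r where r: "r \<in> X" "Max (a ` X) = a r"
    using xi_fin xi_ne unfolding X_def by (rule obtains_MAX)
  have "(\<lambda>n. Max (b n ` Y n)) \<longlonglongrightarrow> Max (a ` X)"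
  proof (rule tendsto_Max_of_sum_powers[OF fin_Y xi_fin[folded X_def] xi_ne[folded X_def]
        xi_card[folded X_def Y_def]])
    show "b n y \<ge> 0" "a y' \<ge> 0" for n y y'
      by (simp_all add: a_def b_def stone_fin_def stone_mod_def)
    show "(\<lambda>n. \<Sum>y\<in>Y n. b n y ^ m) \<longlonglongrightarrow> (\<Sum>y\<in>X. a y ^ m)" if "m \<ge> 1" for m
      using tendsto_sum_power_stone[OF _ _ lim xi_form xi_fin xi_card \<phi> that] graphs
      by (simp add: a_def b_def X_def Y_def)
  qed
  with rs r show "\<exists>rs r. (\<forall>n. rs n \<in> defset1 (V n) (E n) undefined \<xi>) \<and>
      r \<in> defset1 (space M) EL undefined \<xi> \<and>
      (\<lambda>n. stone_fin (V n) (E n) (rs n) p \<phi>) \<longlonglongrightarrow> stone_mod M EL r p \<phi>"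
    by (auto simp: X_def Y_def a_def b_def)
qed

end
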